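(* Let $\mathcal T$ be a good triangulation of $\mathcal C_G$, let $S\in\mathcal T$ be a maximal simplex and let $w\in V$. Then there are unique real numbers $\lambda^w_u$ ($u\in V(S)$) and $\lambda^w_f$ ($f\in D(S)$) such that $$e_w=\sum_{u\in V(S)}\lambda^w_u e_u+\sum_{f\in D(S)}\lambda^w_f(e_{u_f}-e_{v_f}),$$ where $(u_f,v_f)$ is the fixed ordering of the endpoints of $f$.
   Context: For a finite undirected multigraph $G=(V,E)$ (loops, parallel edges and isolated nodes allowed) with $n=|V|$, $m=|E|$, work in $\mathbb{R}^V\times\mathbb{R}^E\cong\mathbb{R}^{n+m}$ with standard basis vectors $e_u$ ($u\in V$), $e_f$ ($f\in E$). Fix for each edge $f$ an ordering $(u,v)$ of its endpoints ($u=v$ for a loop) and set $\widetilde e_f=e_u+e_v-e_f$, $\overleftarrow e_f=e_u-e_v+e_f$, $\overrightarrow e_f=-e_u+e_v+e_f$ (so for a loop $\overleftarrow e_f=\overrightarrow e_f=e_f$). The cosmological polytope $\mathcal C_G$ is the convex hull of $\{e_f,\widetilde e_f,\overleftarrow e_f,\overrightarrow e_f: f\in E\}\cup\{e_u: u\in V\}$; these are exactly its lattice points, and it is an $(n+m-1)$-dimensional polytope in the hyperplane $\sum_i x_i=1$. A good triangulation of $\mathcal C_G$ is a regular triangulation (induced by a height function on the lattice points of $\mathcal C_G$) whose vertex set is the set of all lattice points of $\mathcal C_G$ and which contains the standard simplex $\mathrm{conv}\{e_u,e_f: u\in V, f\in E\}$ as a maximal cell; simplices are identified with their vertex sets. For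 a simplex $S\in\mathcal T$: the selected nodes are $V(S)=\{u\in V: e_u\in S\}$; the squiggly edges $\widetilde E(S)=\{f:\widetilde e_f\in S\}$; the selected edges $\widehat E(S)=\{f: e_f\in S\}$; for non-loop edges $f$, $f\in\overleftarrow E(S)$ iff $\overleftarrow e_f\in S$ and $f\in\overrightarrow E(S)$ iff $\overrightarrow e_f\in S$ (loops are never in $\overleftarrow E(S)\cup\overrightarrow E(S)$); the double edges are $D(S)=(\overleftarrow E(S)\cup\overrightarrow E(S))\cap\widehat E(S)$. *)

theory Defs
  imports Complex_Main
begin

text \<open>Multigraph: vertex set V, edge set E, each edge f with a fixed ordering
 (src f, tgt f) of its endpoints (src f = tgt f for a loop).
 The ambient space R^V x R^E is modelled by functions ('v + 'e) \<Rightarrow> real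
 (only coordinates in V <+> E matter; all points considered vanish elsewhere).\<close>

definition unitv :: "'a \<Rightarrow> 'a \<Rightarrow> real" where
  "unitv i = (\<lambda>j. if j = i then 1 else 0)"

definition eN :: "'v \<Rightarrow> ('v + 'e) \<Rightarrow> real" where
  "eN u = unitv (Inl u)"

definition eE :: "'e \<Rightarrow> ('v + 'e) \<Rightarrow> real" where
  "eE f = unitv (Inr f)"

definition eSq :: "('e \<Rightarrow> 'v) \<Rightarrow> ('e \<Rightarrow> 'v) \<Rightarrow> 'e \<Rightarrow> ('v + 'e) \<Rightarrow> real" where
  "eSq src tgt f = (\<lambda>j. eN (src f) j + eN (tgt f) j - eE f j)"

definition eLeft :: "('e \<Rightarrow> 'v) \<Rightarrow> ('e \<Rightarrow> 'v) \<Rightarrow> 'e \<Rightarrow> ('v + 'e) \<Rightarrow> real" where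
  "eLeft src tgt f = (\<lambda>j. eN (src f) j - eN (tgt f) j + eE f j)"

definition eRight :: "('e \<Rightarrow> 'v) \<Rightarrow> ('e \<Rightarrow> 'v) \<Rightarrow> 'e \<Rightarrow> ('v + 'e) \<Rightarrow> real" where
  "eRight src tgt f = (\<lambda>j. - eN (src f) j + eN (tgt f) j + eE f j)"

definition cosmo_points :: "'v set \<Rightarrow> 'e set \<Rightarrow> ('e \<Rightarrow> 'v) \<Rightarrow> ('e \<Rightarrow> 'v)
    \<Rightarrow> (('v + 'e) \<Rightarrow> real) set" where
  "cosmo_points V E src tgt =
     eN ` V \<union> eE ` E \<union> eSq src tgt ` E \<union> eLeft src tgt ` E \<union> eRight src tgt ` E"

definition conv_hull :: "('a \<Rightarrow> real) set \<Rightarrow> ('a \<Rightarrow> real) set" where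
  "conv_hull C = {x. \<exists>c. (\<forall>p\<in>C. 0 \<le> c p) \<and> sum c C = 1 \<and>
                        x = (\<lambda>i. \<Sum>p\<in>C. c p * p i)}"

definition aff_indep :: "('a \<Rightarrow> real) set \<Rightarrow> bool" where
  "aff_indep C \<longleftrightarrow> finite C \<and> (\<forall>c. sum c C = 0 \<and> (\<forall>i. (\<Sum>p\<in>C. c p * p i) = 0)
                                    \<longrightarrow> (\<forall>p\<in>C. c p = 0))"

text \<open>Maximal cells of the regular subdivision induced by the height function h:
 sets C of n+m affinely independent lattice points such that some affine function
 agrees with h on C and lies strictly below h at all other lattice points
 (i.e. lower facets of the lifted point configuration that are simplices).\<close>
definition lower_cell :: "'v set \<Rightarrow> 'e set \<Rightarrow> ('e \<Rightarrow> 'v) \<Rightarrow> ('e \<Rightarrow> 'v)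
    \<Rightarrow> ((('v + 'e) \<Rightarrow> real) \<Rightarrow> real) \<Rightarrow> (('v + 'e) \<Rightarrow> real) set \<Rightarrow> bool" where
  "lower_cell V E src tgt h C \<longleftrightarrow>
     C \<subseteq> cosmo_points V E src tgt \<and> card C = card V + card E \<and> aff_indep C \<and>
     (\<exists>a b. (\<forall>p\<in>C. (\<Sum>i\<in>V <+> E. a i * p i) + b = h p) \<and>
            (\<forall>p\<in>cosmo_points V E src tgt - C. (\<Sum>i\<in>V <+> E. a i * p i) + b < h p))"

text \<open>T (a set of simplices, each identified with its vertex set, closed under faces)
 is the regular triangulation of the cosmological polytope induced by h.\<close>
definition regular_triangulation :: "'v set \<Rightarrow> 'e set \<Rightarrow> ('e \<Rightarrow> 'v) \<Rightarrow> ('e \<Rightarrow> 'v)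
    \<Rightarrow> ((('v + 'e) \<Rightarrow> real) \<Rightarrow> real) \<Rightarrow> (('v + 'e) \<Rightarrow> real) set set \<Rightarrow> bool" where
  "regular_triangulation V E src tgt h T \<longleftrightarrow>
     T = {S. \<exists>C. lower_cell V E src tgt h C \<and> S \<subseteq> C} \<and>
     conv_hull (cosmo_points V E src tgt) \<subseteq>
        \<Union>{conv_hull C | C. lower_cell V E src tgt h C}"

definition max_simplex :: "'a set set \<Rightarrow> 'a set \<Rightarrow> bool" where
  "max_simplex T S \<longleftrightarrow> S \<in> T \<and> \<not> (\<exists>S'\<in>T. S \<subset> S')"

definition std_simplex :: "'v set \<Rightarrow> 'e set \<Rightarrow> (('v + 'e) \<Rightarrow> real) set" where
  "std_simplex V E = eN ` V \<union> eE ` E"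

definition good_triangulation :: "'v set \<Rightarrow> 'e set \<Rightarrow> ('e \<Rightarrow> 'v) \<Rightarrow> ('e \<Rightarrow> 'v)
    \<Rightarrow> (('v + 'e) \<Rightarrow> real) set set \<Rightarrow> bool" where
  "good_triangulation V E src tgt T \<longleftrightarrow>
     (\<exists>h. regular_triangulation V E src tgt h T) \<and>
     \<Union>T = cosmo_points V E src tgt \<and>
     max_simplex T (std_simplex V E)"

definition sel_nodes :: "'v set \<Rightarrow> (('v + 'e) \<Rightarrow> real) set \<Rightarrow> 'v set" where
  "sel_nodes V S = {u\<in>V. eN u \<in> S}"

definition double_edges :: "'e set \<Rightarrow> ('e \<Rightarrow> 'v) \<Rightarrow> ('e \<Rightarrow> 'v)
    \<Rightarrow> (('v + 'e) \<Rightarrow> real) set \<Rightarrow> 'e set" where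
  "double_edges E src tgt S =
     {f\<in>E. src f \<noteq> tgt f \<and> (eLeft src tgt f \<in> S \<or> eRight src tgt f \<in> S) \<and> eE f \<in> S}"

end

(* The points of a maximal cell S are n + m affinely independent lattice points of the
   hyperplane sum x = 1, hence a basis of R^(V+E).  Subtracting the affine function that
   supports the standard simplex in the lifting from the one supporting S gives a linear form
   that is <= 0 at every e_u and e_f, vanishes at those lying in S, and is positive at the
   other points of S.  Evaluating it on e~_f = e_u + e_v - e_f and e<-_f = e_u - e_v + e_f,
   e->_f = e_v - e_u + e_f shows that S never contains e_f together with e~_f, nor two of
   e~_f, e<-_f, e->_f.  So every point of S is e_u with u in V(S), one chosen point per edge f
   (the only one among them with a nonzero f-coordinate), or e_f +- (e_u - e_v) for a double
   edge f.  Writing e_w over this spanning family, the coefficients of the chosen edge points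
   vanish since e_w has no edge coordinates.  Uniqueness: e_u - e_v = +-(e<-_f or e->_f - e_f)
   turns a vanishing combination into one of distinct points of S. *)

theory Submission
  imports Defs "HOL-Library.Function_Algebras"
begin

text \<open>The library has no real_vector instance for functions, so the vector-space theory is
  obtained by interpreting vector_space with pointwise scaling.\<close>

definition scale_fun :: "real \<Rightarrow> ('a \<Rightarrow> real) \<Rightarrow> 'a \<Rightarrow> real" where
  "scale_fun r f = (\<lambda>j. r * f j)"

interpretation fun_space: vector_space scale_fun
  by unfold_locales (auto simp: scale_fun_def algebra_simps fun_eq_iff)

lemma sum_scale_fun: "(\<Sum>v\<in>A. scale_fun (c v) (g v)) = (\<lambda>j. \<Sum>v\<in>A. c v * g v j)"
  by (induction A rule: infinite_finite_induct) (auto simp: scale_fun_def fun_eq_iff)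

lemma sum_delta_coeff:
  fixes c :: real
  assumes "finite A" and "a \<in> A"
  shows "(\<Sum>x\<in>A. (if x = a then c else 0) * g x) = c * g a"
proof -
  have "(\<Sum>x\<in>A. (if x = a then c else 0) * g x) = (\<Sum>x\<in>A. if x = a then c * g a else 0)"
    by (rule sum.cong) auto
  then show ?thesis
    using assms by simp
qed

lemma independent_fun_iff:
  assumes "finite S"
  shows "fun_space.independent S \<longleftrightarrow> (\<forall>c. (\<forall>j. (\<Sum>p\<in>S. c p * p j) = 0) \<longrightarrow> (\<forall>p\<in>S. c p = 0))"
  using fun_space.dependent_finite[OF assms] by (auto simp: sum_scale_fun fun_eq_iff)

lemma independent_inj_family:
  assumes indep: "fun_space.independent S" and "finite K" and inj: "inj_on g K" and "g ` K \<subseteq> S"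
    and zero: "\<forall>j. (\<Sum>k\<in>K. a k * g k j) = 0"
  shows "\<forall>k\<in>K. a k = 0"
proof -
  define c where "c = a \<circ> the_inv_into K g"
  have "fun_space.independent (g ` K)"
    using fun_space.independent_mono[OF indep \<open>g ` K \<subseteq> S\<close>] .
  moreover have "\<forall>j. (\<Sum>p\<in>g ` K. c p * p j) = 0"
    using inj zero by (simp add: sum.reindex c_def the_inv_into_f_f)
  ultimately have "\<forall>p\<in>g ` K. c p = 0"
    using \<open>finite K\<close> by (simp add: independent_fun_iff)
  then show ?thesis
    using inj by (auto simp: c_def the_inv_into_f_f)
qed

definition supported_on :: "'a set \<Rightarrow> ('a \<Rightarrow> real) set" where
  "supported_on I = {x. \<forall>j. j \<notin> I \<longrightarrow> x j = 0}"

lemma supported_on_subset_span_units: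
  assumes "finite I"
  shows "supported_on I \<subseteq> fun_space.span (unitv ` I)"
proof
  fix x assume "x \<in> supported_on I"
  have "(\<Sum>i\<in>I. x i * unitv i j) = x j" for j
  proof -
    have "(\<Sum>i\<in>I. x i * unitv i j) = (\<Sum>i\<in>I. if j = i then x j else 0)"
      by (rule sum.cong) (auto simp: unitv_def)
    also have "\<dots> = x j"
      using assms \<open>x \<in> supported_on I\<close> by (simp add: supported_on_def)
    finally show ?thesis .
  qed
  then have "x = (\<Sum>i\<in>I. scale_fun (x i) (unitv i))"
    by (simp add: sum_scale_fun)
  also have "\<dots> \<in> fun_space.span (unitv ` I)"
    by (intro fun_space.span_sum fun_space.span_scale fun_space.span_base) auto
  finally show "x \<in> fun_space.span (unitv ` I)" .
qed

lemma supported_on_subset_span_independent: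
  assumes "finite I" and "S \<subseteq> supported_on I" and indep: "fun_space.independent S"
    and card: "card S = card I"
  shows "supported_on I \<subseteq> fun_space.span S"
proof
  fix x assume x: "x \<in> supported_on I"
  show "x \<in> fun_space.span S"
  proof (rule ccontr)
    assume x_new: "x \<notin> fun_space.span S"
    have "insert x S \<subseteq> fun_space.span (unitv ` I)"
      using supported_on_subset_span_units[OF \<open>finite I\<close>] x \<open>S \<subseteq> supported_on I\<close> by blast
    moreover have "fun_space.independent (insert x S)"
      using fun_space.independent_insertI[OF x_new indep] .
    ultimately have "finite (insert x S) \<and> card (insert x S) \<le> card (unitv ` I)"
      using \<open>finite I\<close> by (intro fun_space.independent_span_bound) auto
    moreover have "card (unitv ` I) \<le> card I"
      using \<open>finite I\<close> by (rule card_image_le)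
    moreover have "x \<notin> S"
      using x_new fun_space.span_base by blast
    ultimately show False
      using card by auto
  qed
qed

definition lform :: "'a set \<Rightarrow> ('a \<Rightarrow> real) \<Rightarrow> ('a \<Rightarrow> real) \<Rightarrow> real" where
  "lform I k p = (\<Sum>i\<in>I. k i * p i)"

lemma lform_unitv:
  assumes "finite I" and "a \<in> I"
  shows "lform I k (unitv a) = k a"
proof -
  have "lform I k (unitv a) = (\<Sum>i\<in>I. if i = a then k a else 0)"
    unfolding lform_def by (rule sum.cong) (auto simp: unitv_def)
  then show ?thesis
    using assms by simp
qed

lemma lform_eSq:
  "lform I k (eSq src tgt f) = lform I k (eN (src f)) + lform I k (eN (tgt f)) - lform I k (eE f)"
  by (simp add: lform_def eSq_def algebra_simps sum.distrib sum_subtractf)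

lemma lform_eLeft:
  "lform I k (eLeft src tgt f) = lform I k (eN (src f)) - lform I k (eN (tgt f)) + lform I k (eE f)"
  by (simp add: lform_def eLeft_def algebra_simps sum.distrib sum_subtractf)

lemma lform_eRight:
  "lform I k (eRight src tgt f) = lform I k (eN (tgt f)) - lform I k (eN (src f)) + lform I k (eE f)"
  by (simp add: lform_def eRight_def algebra_simps sum.distrib sum_subtractf)

lemma eN_apply: "eN u j = (if j = Inl u then 1 else 0)"
  by (simp add: eN_def unitv_def)

lemma eE_apply: "eE f j = (if j = Inr f then 1 else 0)"
  by (simp add: eE_def unitv_def)

lemma eN_eq_iff [simp]: "eN u = eN v \<longleftrightarrow> u = v"
  by (metis eN_apply sum.inject(1) zero_neq_one)

lemma eE_eq_iff [simp]: "eE f = eE g \<longleftrightarrow> f = g"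
  by (metis eE_apply sum.inject(2) zero_neq_one)

lemma eN_neq_eE [simp]: "eN u \<noteq> eE f" "eE f \<noteq> eN u"
  by (metis eE_apply eN_apply Inl_Inr_False zero_neq_one)+

lemma eN_in_std: "u \<in> V \<Longrightarrow> eN u \<in> std_simplex V E"
  and eE_in_std: "f \<in> E \<Longrightarrow> eE f \<in> std_simplex V E"
  by (simp_all add: std_simplex_def)

lemma not_std_if_negative_coord: "p j < 0 \<Longrightarrow> p \<notin> std_simplex V E"
  by (auto simp: std_simplex_def eN_apply eE_apply split: if_splits)

lemma eSq_not_std: "eSq src tgt f \<notin> std_simplex V E"
  by (rule not_std_if_negative_coord[of _ "Inr f"]) (simp add: eSq_def eN_apply eE_apply)

lemma eLeft_not_std: "src f \<noteq> tgt f \<Longrightarrow> eLeft src tgt f \<notin> std_simplex V E"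
  by (rule not_std_if_negative_coord[of _ "Inl (tgt f)"]) (simp add: eLeft_def eN_apply eE_apply)

lemma eRight_not_std: "src f \<noteq> tgt f \<Longrightarrow> eRight src tgt f \<notin> std_simplex V E"
  by (rule not_std_if_negative_coord[of _ "Inl (src f)"]) (simp add: eRight_def eN_apply eE_apply)

lemma eLeft_loop: "src f = tgt f \<Longrightarrow> eLeft src tgt f = eE f"
  and eRight_loop: "src f = tgt f \<Longrightarrow> eRight src tgt f = eE f"
  by (auto simp: eLeft_def eRight_def fun_eq_iff)

lemma max_simplex_lower_cell:
  assumes "regular_triangulation V E src tgt h T" and "max_simplex T S"
  shows "lower_cell V E src tgt h S"
proof -
  obtain C where C: "lower_cell V E src tgt h C" "S \<subseteq> C"
    using assms unfolding regular_triangulation_def max_simplex_def by blast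
  then have "C \<in> T"
    using assms(1) unfolding regular_triangulation_def by blast
  then show ?thesis
    using C assms(2) unfolding max_simplex_def by blast
qed

locale cosmo_graph =
  fixes V :: "'v set" and E :: "'e set" and src tgt :: "'e \<Rightarrow> 'v"
  assumes finite_V: "finite V" and finite_E: "finite E"
    and ends: "\<forall>f\<in>E. src f \<in> V \<and> tgt f \<in> V"
begin

lemma lform_eN: "u \<in> V \<Longrightarrow> lform (V <+> E) k (eN u) = k (Inl u)"
  unfolding eN_def using finite_V finite_E by (intro lform_unitv) auto

lemma lform_eE: "f \<in> E \<Longrightarrow> lform (V <+> E) k (eE f) = k (Inr f)"
  unfolding eE_def using finite_V finite_E by (intro lform_unitv) auto

lemma cosmo_points_coord_sum:
  "p \<in> cosmo_points V E src tgt \<Longrightarrow> lform (V <+> E) (\<lambda>_. 1) p = 1"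
  using ends unfolding cosmo_points_def
  by (auto simp: lform_eN lform_eE lform_eSq lform_eLeft lform_eRight)

lemma cosmo_points_supported: "cosmo_points V E src tgt \<subseteq> supported_on (V <+> E)"
  using ends unfolding cosmo_points_def supported_on_def
  by (auto simp: eN_apply eE_apply eSq_def eLeft_def eRight_def split: sum.splits)

lemma independent_if_aff_indep:
  assumes "C \<subseteq> cosmo_points V E src tgt" and aff: "aff_indep C"
  shows "fun_space.independent C"
proof -
  have "finite C"
    using aff by (simp add: aff_indep_def)
  moreover have "\<forall>p\<in>C. c p = 0" if zero: "\<forall>j. (\<Sum>p\<in>C. c p * p j) = 0" for c
  proof -
    have "sum c C = (\<Sum>p\<in>C. c p * lform (V <+> E) (\<lambda>_. 1) p)"
      using assms(1) cosmo_points_coord_sum by (intro sum.cong) auto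
    also have "\<dots> = (\<Sum>i\<in>V <+> E. \<Sum>p\<in>C. c p * p i)"
      unfolding lform_def by (simp add: sum_distrib_left sum.swap[of _ C])
    finally have "sum c C = 0"
      using zero by simp
    then show ?thesis
      using aff zero by (simp add: aff_indep_def)
  qed
  ultimately show ?thesis
    by (simp add: independent_fun_iff)
qed

lemma good_triangulation_separating_form:
  assumes good: "good_triangulation V E src tgt T" and max_S: "max_simplex T S"
  obtains k where "\<forall>p\<in>std_simplex V E. lform (V <+> E) k p \<le> 0"
    and "\<forall>p\<in>S \<inter> std_simplex V E. lform (V <+> E) k p = 0"
    and "\<forall>p\<in>S - std_simplex V E. 0 < lform (V <+> E) k p"
proof -
  let ?I = "V <+> E" and ?P = "cosmo_points V E src tgt" and ?D = "std_simplex V E"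
  obtain h where reg: "regular_triangulation V E src tgt h T" and max_D: "max_simplex T ?D"
    using good unfolding good_triangulation_def by blast
  obtain a0 b0 where on_D: "\<forall>p\<in>?D. (\<Sum>i\<in>?I. a0 i * p i) + b0 = h p"
      and off_D: "\<forall>p\<in>?P - ?D. (\<Sum>i\<in>?I. a0 i * p i) + b0 < h p"
    using max_simplex_lower_cell[OF reg max_D] unfolding lower_cell_def by blast
  obtain a b where on_S: "\<forall>p\<in>S. (\<Sum>i\<in>?I. a i * p i) + b = h p"
      and off_S: "\<forall>p\<in>?P - S. (\<Sum>i\<in>?I. a i * p i) + b < h p"
      and S_points: "S \<subseteq> ?P"
    using max_simplex_lower_cell[OF reg max_S] unfolding lower_cell_def by blast
  have D_points: "?D \<subseteq> ?P"
    unfolding std_simplex_def cosmo_points_def by blast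
  txt \<open>On lattice points the coordinates sum to 1, so the constant b - b0 of the difference
    of the two supporting affine functions can be absorbed into its linear part.\<close>
  define k where "k i = a i - a0 i + (b - b0)" for i
  have k_diff: "lform ?I k p = ((\<Sum>i\<in>?I. a i * p i) + b) - ((\<Sum>i\<in>?I. a0 i * p i) + b0)"
    if "p \<in> ?P" for p
  proof -
    have "lform ?I k p = (\<Sum>i\<in>?I. a i * p i) - (\<Sum>i\<in>?I. a0 i * p i) + (b - b0) * lform ?I (\<lambda>_. 1) p"
      by (simp add: lform_def k_def algebra_simps sum.distrib sum_subtractf sum_distrib_left)
    then show ?thesis
      using cosmo_points_coord_sum[OF that] by simp
  qed
  have below_h: "(\<Sum>i\<in>?I. a i * p i) + b \<le> h p" if "p \<in> ?P" for p
    using on_S off_S that by (cases "p \<in> S") (auto intro: less_imp_le)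
  show ?thesis
  proof
    show "\<forall>p\<in>?D. lform ?I k p \<le> 0"
      using k_diff below_h on_D D_points by fastforce
    show "\<forall>p\<in>S \<inter> ?D. lform ?I k p = 0"
      using k_diff on_S on_D D_points by fastforce
    show "\<forall>p\<in>S - ?D. 0 < lform ?I k p"
      using k_diff on_S off_D S_points by fastforce
  qed
qed

end

locale cosmo_max_simplex = cosmo_graph +
  fixes T :: "(('v + 'e) \<Rightarrow> real) set set" and S :: "(('v + 'e) \<Rightarrow> real) set"
  assumes good: "good_triangulation V E src tgt T" and max_S: "max_simplex T S"
begin

lemma S_lower_cell: "\<exists>h. lower_cell V E src tgt h S"
  using good max_simplex_lower_cell[OF _ max_S] unfolding good_triangulation_def by blast

lemma S_subset_points: "S \<subseteq> cosmo_points V E src tgt"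
  and card_S: "card S = card (V <+> E)"
  and independent_S: "fun_space.independent S"
  using S_lower_cell finite_V finite_E independent_if_aff_indep
  unfolding lower_cell_def by (auto simp: card_Plus)

lemma finite_double_edges: "finite (double_edges E src tgt S)"
  using finite_E by (simp add: double_edges_def)

lemma finite_sel_nodes: "finite (sel_nodes V S)"
  using finite_V by (simp add: sel_nodes_def)

lemma edge_point_exclusions:
  assumes "f \<in> E"
  shows not_edge_and_squiggle: "\<not> (eE f \<in> S \<and> eSq src tgt f \<in> S)"
    and not_squiggle_and_left: "src f \<noteq> tgt f \<Longrightarrow> \<not> (eSq src tgt f \<in> S \<and> eLeft src tgt f \<in> S)"
    and not_squiggle_and_right: "src f \<noteq> tgt f \<Longrightarrow> \<not> (eSq src tgt f \<in> S \<and> eRight src tgt f \<in> S)"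
    and not_left_and_right: "src f \<noteq> tgt f \<Longrightarrow> \<not> (eLeft src tgt f \<in> S \<and> eRight src tgt f \<in> S)"
proof -
  obtain k where k_std: "\<forall>p\<in>std_simplex V E. lform (V <+> E) k p \<le> 0"
    and k_shared: "\<forall>p\<in>S \<inter> std_simplex V E. lform (V <+> E) k p = 0"
    and k_pos: "\<forall>p\<in>S - std_simplex V E. 0 < lform (V <+> E) k p"
    using good_triangulation_separating_form[OF good max_S] by blast
  let ?k = "lform (V <+> E) k"
  have ends_f: "src f \<in> V" "tgt f \<in> V"
    using ends assms by auto
  have nodes: "?k (eN (src f)) \<le> 0" "?k (eN (tgt f)) \<le> 0" and edge: "?k (eE f) \<le> 0"
    using k_std ends_f assms by (auto simp: std_simplex_def)
  have edge_shared: "eE f \<in> S \<Longrightarrow> ?k (eE f) = 0"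
    using k_shared assms by (auto simp: std_simplex_def)
  have squiggle: "eSq src tgt f \<in> S \<Longrightarrow> 0 < ?k (eSq src tgt f)"
    using k_pos eSq_not_std[of src tgt f V E] by blast
  have left: "src f \<noteq> tgt f \<Longrightarrow> eLeft src tgt f \<in> S \<Longrightarrow> 0 < ?k (eLeft src tgt f)"
    using k_pos eLeft_not_std[of src f tgt V E] by blast
  have right: "src f \<noteq> tgt f \<Longrightarrow> eRight src tgt f \<in> S \<Longrightarrow> 0 < ?k (eRight src tgt f)"
    using k_pos eRight_not_std[of src f tgt V E] by blast
  show "\<not> (eE f \<in> S \<and> eSq src tgt f \<in> S)"
    using nodes edge_shared squiggle by (auto simp: lform_eSq)
  show "\<not> (eSq src tgt f \<in> S \<and> eLeft src tgt f \<in> S)" if "src f \<noteq> tgt f"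
    using nodes squiggle left[OF that] by (auto simp: lform_eSq lform_eLeft)
  show "\<not> (eSq src tgt f \<in> S \<and> eRight src tgt f \<in> S)" if "src f \<noteq> tgt f"
    using nodes squiggle right[OF that] by (auto simp: lform_eSq lform_eRight)
  show "\<not> (eLeft src tgt f \<in> S \<and> eRight src tgt f \<in> S)" if "src f \<noteq> tgt f"
    using edge left[OF that] right[OF that] by (auto simp: lform_eLeft lform_eRight)
qed

text \<open>By edge_point_exclusions, each point of S over an edge f is either edge_rep f or
  eE f +- (eN (src f) - eN (tgt f)) for a double edge f; so S lies in the span of the family
  below, which extends the one of the theorem by the terms edge_rep f.\<close>

definition edge_rep :: "'e \<Rightarrow> ('v + 'e) \<Rightarrow> real" where
  "edge_rep f = (if eE f \<in> S then eE f else if eSq src tgt f \<in> S then eSq src tgt f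
     else if eLeft src tgt f \<in> S then eLeft src tgt f else eRight src tgt f)"

lemma edge_rep_Inr_other: "g \<noteq> f \<Longrightarrow> edge_rep f (Inr g) = 0"
  by (simp add: edge_rep_def eSq_def eLeft_def eRight_def eN_apply eE_apply)

lemma edge_rep_Inr_self: "edge_rep f (Inr f) \<noteq> 0"
  by (simp add: edge_rep_def eSq_def eLeft_def eRight_def eN_apply eE_apply)

definition combination :: "('v \<Rightarrow> real) \<Rightarrow> ('e \<Rightarrow> real) \<Rightarrow> ('e \<Rightarrow> real) \<Rightarrow> ('v + 'e) \<Rightarrow> real" where
  "combination lu lf lq = (\<lambda>j. (\<Sum>u\<in>sel_nodes V S. lu u * eN u j)
     + (\<Sum>f\<in>double_edges E src tgt S. lf f * (eN (src f) j - eN (tgt f) j))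
     + (\<Sum>f\<in>E. lq f * edge_rep f j))"

definition combinations :: "(('v + 'e) \<Rightarrow> real) set" where
  "combinations = {combination lu lf lq | lu lf lq. True}"

lemma combinations_subspace: "fun_space.subspace combinations"
  unfolding fun_space.subspace_def
proof (intro conjI ballI allI)
  have "0 = combination (\<lambda>_. 0) (\<lambda>_. 0) (\<lambda>_. 0)"
    by (simp add: combination_def fun_eq_iff)
  then show "0 \<in> combinations"
    unfolding combinations_def by blast
next
  fix x y assume "x \<in> combinations" "y \<in> combinations"
  then obtain a1 a2 a3 b1 b2 b3 where "x = combination a1 a2 a3" "y = combination b1 b2 b3"
    unfolding combinations_def by blast
  then have "x + y = combination (\<lambda>u. a1 u + b1 u) (\<lambda>f. a2 f + b2 f) (\<lambda>f. a3 f + b3 f)"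
    by (simp add: combination_def fun_eq_iff sum.distrib distrib_right add_ac)
  then show "x + y \<in> combinations"
    unfolding combinations_def by blast
next
  fix c x assume "x \<in> combinations"
  then obtain a1 a2 a3 where "x = combination a1 a2 a3"
    unfolding combinations_def by blast
  then have "scale_fun c x = combination (\<lambda>u. c * a1 u) (\<lambda>f. c * a2 f) (\<lambda>f. c * a3 f)"
    by (simp add: combination_def fun_eq_iff scale_fun_def sum_distrib_left distrib_left mult.assoc)
  then show "scale_fun c x \<in> combinations"
    unfolding combinations_def by blast
qed

lemma node_in_combinations:
  assumes "u \<in> sel_nodes V S"
  shows "eN u \<in> combinations"
proof -
  have "eN u = combination (\<lambda>v. if v = u then 1 else 0) (\<lambda>_. 0) (\<lambda>_. 0)"
    using assms finite_sel_nodes by (simp add: combination_def sum_delta_coeff fun_eq_iff)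
  then show ?thesis
    unfolding combinations_def by blast
qed

lemma edge_rep_in_combinations:
  assumes "f \<in> E"
  shows "edge_rep f \<in> combinations"
proof -
  have "edge_rep f = combination (\<lambda>_. 0) (\<lambda>_. 0) (\<lambda>g. if g = f then 1 else 0)"
    using assms finite_E by (simp add: combination_def sum_delta_coeff fun_eq_iff)
  then show ?thesis
    unfolding combinations_def by blast
qed

lemma double_edge_vector_in_combinations:
  assumes "f \<in> double_edges E src tgt S"
  shows "(\<lambda>j. eN (src f) j - eN (tgt f) j) \<in> combinations"
proof -
  have "(\<lambda>j. eN (src f) j - eN (tgt f) j) = combination (\<lambda>_. 0) (\<lambda>g. if g = f then 1 else 0) (\<lambda>_. 0)"
    using assms finite_double_edges by (simp add: combination_def sum_delta_coeff fun_eq_iff)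
  then show ?thesis
    unfolding combinations_def by blast
qed

lemma S_subset_combinations: "S \<subseteq> combinations"
proof
  fix p assume "p \<in> S"
  let ?d = "\<lambda>f j. eN (src f) j - eN (tgt f) j"
  have left_split: "eLeft src tgt f = eE f + ?d f" and right_split: "eRight src tgt f = eE f - ?d f" for f
    by (auto simp: eLeft_def eRight_def fun_eq_iff)
  from \<open>p \<in> S\<close> S_subset_points consider
      (node) u where "u \<in> V" "p = eN u"
    | (edge) f where "f \<in> E" "p \<in> {eE f, eSq src tgt f, eLeft src tgt f, eRight src tgt f}"
    unfolding cosmo_points_def by blast
  then show "p \<in> combinations"
  proof cases
    case node
    then show ?thesis
      using \<open>p \<in> S\<close> node_in_combinations by (simp add: sel_nodes_def)
  next
    case edge
    show ?thesis
    proof (cases "src f \<noteq> tgt f \<and> eE f \<in> S \<and> p \<in> {eLeft src tgt f, eRight src tgt f}")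
      case True
      then have "f \<in> double_edges E src tgt S"
        using edge \<open>p \<in> S\<close> by (auto simp: double_edges_def)
      moreover have "edge_rep f = eE f"
        using True by (simp add: edge_rep_def)
      ultimately have "eE f \<in> combinations" "?d f \<in> combinations"
        using edge edge_rep_in_combinations double_edge_vector_in_combinations by metis+
      then show ?thesis
        using True left_split right_split
          fun_space.subspace_add[OF combinations_subspace] fun_space.subspace_diff[OF combinations_subspace]
        by auto
    next
      case False
      then have "edge_rep f = p"
        using edge \<open>p \<in> S\<close> edge_point_exclusions[OF edge(1)] eLeft_loop[of src f tgt] eRight_loop[of src f tgt]
        by (cases "src f = tgt f") (auto simp: edge_rep_def)
      then show ?thesis
        using edge edge_rep_in_combinations by metis
    qed
  qed
qed

lemma supported_subset_combinations: "supported_on (V <+> E) \<subseteq> combinations"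
proof -
  have "supported_on (V <+> E) \<subseteq> fun_space.span S"
    using finite_V finite_E S_subset_points cosmo_points_supported independent_S card_S
    by (intro supported_on_subset_span_independent) auto
  also have "\<dots> \<subseteq> combinations"
    using S_subset_combinations combinations_subspace by (rule fun_space.span_minimal)
  finally show ?thesis .
qed

lemma combination_Inr:
  assumes "g \<in> E"
  shows "combination lu lf lq (Inr g) = lq g * edge_rep g (Inr g)"
proof -
  have "(\<Sum>f\<in>E. lq f * edge_rep f (Inr g)) = (\<Sum>f\<in>E. if f = g then lq g * edge_rep g (Inr g) else 0)"
    by (rule sum.cong) (auto simp: edge_rep_Inr_other)
  then show ?thesis
    using assms finite_E by (simp add: combination_def eN_apply)
qed

lemma node_combination_exists:
  assumes "w \<in> V"
  shows "\<exists>lu lf. eN w = combination lu lf (\<lambda>_. 0)"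
proof -
  have "eN w \<in> supported_on (V <+> E)"
    using assms by (auto simp: supported_on_def eN_apply)
  then obtain lu lf lq where w_combination: "eN w = combination lu lf lq"
    using supported_subset_combinations unfolding combinations_def by blast
  txt \<open>Only edge_rep g has a nonzero Inr g coordinate, and eN w has none.\<close>
  have "lq g = 0" if "g \<in> E" for g
    using fun_cong[OF w_combination, of "Inr g"] combination_Inr[OF that] edge_rep_Inr_self[of g]
    by (simp add: eN_apply)
  then have "combination lu lf lq = combination lu lf (\<lambda>_. 0)"
    by (simp add: combination_def)
  then show ?thesis
    using w_combination by metis
qed

definition double_side :: "'e \<Rightarrow> ('v + 'e) \<Rightarrow> real" where
  "double_side f = (if eLeft src tgt f \<in> S then eLeft src tgt f else eRight src tgt f)"

lemma double_side_in_S: "f \<in> double_edges E src tgt S \<Longrightarrow> double_side f \<in> S"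
  by (auto simp: double_side_def double_edges_def)

lemma double_side_not_std: "f \<in> double_edges E src tgt S \<Longrightarrow> double_side f \<notin> std_simplex V E"
  by (auto simp: double_side_def double_edges_def eLeft_not_std eRight_not_std)

lemma double_side_Inr: "double_side f (Inr g) = (if g = f then 1 else 0)"
  by (simp add: double_side_def eLeft_def eRight_def eN_apply eE_apply)

lemma double_edge_vector_eq:
  "eN (src f) j - eN (tgt f) j
     = (if eLeft src tgt f \<in> S then 1 else -1) * (double_side f j - eE f j)"
  by (simp add: double_side_def eLeft_def eRight_def)

lemma inj_on_double_edge_family:
  "inj_on (case_sum eN (case_sum eE double_side))
     (sel_nodes V S <+> (double_edges E src tgt S <+> double_edges E src tgt S))"
proof -
  have side_ne_node: "eN u \<noteq> double_side f"
    if "f \<in> double_edges E src tgt S" "u \<in> sel_nodes V S" for f u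
    using that double_side_not_std[OF that(1)] eN_in_std[of u V E] by (auto simp: sel_nodes_def)
  have side_ne_edge: "eE g \<noteq> double_side f"
    if "f \<in> double_edges E src tgt S" "g \<in> double_edges E src tgt S" for f g
    using that double_side_not_std[OF that(1)] eE_in_std[of g E V] by (auto simp: double_edges_def)
  have side_inj: "f = g" if "double_side f = double_side g" for f g
    using fun_cong[OF that, of "Inr f"] by (simp add: double_side_Inr split: if_splits)
  show ?thesis
    unfolding inj_on_def
  proof (intro ballI impI)
    fix x y
    assume "x \<in> sel_nodes V S <+> (double_edges E src tgt S <+> double_edges E src tgt S)"
      and "y \<in> sel_nodes V S <+> (double_edges E src tgt S <+> double_edges E src tgt S)"
      and "case_sum eN (case_sum eE double_side) x = case_sum eN (case_sum eE double_side) y"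
    then show "x = y"
      using side_ne_node side_ne_node[THEN not_sym] side_ne_edge side_ne_edge[THEN not_sym] side_inj
      by (elim PlusE) auto
  qed
qed

lemma node_combination_independent:
  assumes zero: "combination lu lf (\<lambda>_. 0) = 0"
  shows "(\<forall>u\<in>sel_nodes V S. lu u = 0) \<and> (\<forall>f\<in>double_edges E src tgt S. lf f = 0)"
proof -
  let ?VS = "sel_nodes V S" and ?DS = "double_edges E src tgt S"
  define \<sigma> where "\<sigma> f = (if eLeft src tgt f \<in> S then 1 else -1 :: real)" for f
  define a where "a = case_sum lu (case_sum (\<lambda>f. - \<sigma> f * lf f) (\<lambda>f. \<sigma> f * lf f))"
  have "(\<Sum>k\<in>?VS <+> (?DS <+> ?DS). a k * case_sum eN (case_sum eE double_side) k j) = 0" for j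
  proof -
    have "(\<Sum>f\<in>?DS. - \<sigma> f * lf f * eE f j) + (\<Sum>f\<in>?DS. \<sigma> f * lf f * double_side f j)
        = (\<Sum>f\<in>?DS. lf f * (eN (src f) j - eN (tgt f) j))"
      by (simp add: double_edge_vector_eq \<sigma>_def sum.distrib[symmetric] algebra_simps)
    then show ?thesis
      using fun_cong[OF zero, of j] finite_sel_nodes finite_double_edges
      by (simp add: sum.Plus a_def combination_def comp_def)
  qed
  moreover have "case_sum eN (case_sum eE double_side) ` (?VS <+> (?DS <+> ?DS)) \<subseteq> S"
    using double_side_in_S by (auto simp: sel_nodes_def double_edges_def)
  ultimately have a_zero: "\<forall>k\<in>?VS <+> (?DS <+> ?DS). a k = 0"
    using independent_S finite_sel_nodes finite_double_edges inj_on_double_edge_family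
    by (intro independent_inj_family) auto
  have "lu u = 0" if "u \<in> ?VS" for u
    using a_zero that by (force simp: a_def)
  moreover have "lf f = 0" if "f \<in> ?DS" for f
    using a_zero that by (force simp: a_def \<sigma>_def split: if_splits)
  ultimately show ?thesis
    by blast
qed

lemma combination_diff:
  "combination lu lf lq - combination lu' lf' lq' = combination (\<lambda>u. lu u - lu' u) (\<lambda>f. lf f - lf' f) (\<lambda>f. lq f - lq' f)"
  by (simp add: combination_def fun_eq_iff sum_subtractf left_diff_distrib)

lemma node_combination_unique:
  assumes "combination lu lf (\<lambda>_. 0) = combination lu' lf' (\<lambda>_. 0)"
  shows "(\<forall>u\<in>sel_nodes V S. lu u = lu' u) \<and> (\<forall>f\<in>double_edges E src tgt S. lf f = lf' f)"
proof -
  have "combination (\<lambda>u. lu u - lu' u) (\<lambda>f. lf f - lf' f) (\<lambda>_. 0) = 0"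
    using combination_diff[of lu lf "\<lambda>_. 0" lu' lf' "\<lambda>_. 0"] assms by simp
  from node_combination_independent[OF this] show ?thesis
    by simp
qed

lemma node_combination_apply:
  "combination lu lf (\<lambda>_. 0) j = (\<Sum>u\<in>sel_nodes V S. lu u * eN u j)
     + (\<Sum>f\<in>double_edges E src tgt S. lf f * (eN (src f) j - eN (tgt f) j))"
  by (simp add: combination_def)

end

theorem mainTheorem2:
  fixes V :: "'v set" and E :: "'e set" and src tgt :: "'e \<Rightarrow> 'v"
    and T :: "(('v + 'e) \<Rightarrow> real) set set" and S :: "(('v + 'e) \<Rightarrow> real) set" and w :: 'v
  assumes "finite V" and "finite E"
    and "\<forall>f\<in>E. src f \<in> V \<and> tgt f \<in> V"
    and "good_triangulation V E src tgt T"
    and "max_simplex T S"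
    and "w \<in> V"
  shows "(\<exists>lu lf. \<forall>j::'v + 'e. eN w j =
            (\<Sum>u\<in>sel_nodes V S. lu u * eN u j) +
            (\<Sum>f\<in>double_edges E src tgt S. lf f * (eN (src f) j - eN (tgt f) j)))
       \<and> (\<forall>lu lf lu' lf'.
            (\<forall>j::'v + 'e. eN w j =
               (\<Sum>u\<in>sel_nodes V S. lu u * eN u j) +
               (\<Sum>f\<in>double_edges E src tgt S. lf f * (eN (src f) j - eN (tgt f) j))) \<and>
            (\<forall>j::'v + 'e. eN w j =
               (\<Sum>u\<in>sel_nodes V S. lu' u * eN u j) +
               (\<Sum>f\<in>double_edges E src tgt S. lf' f * (eN (src f) j - eN (tgt f) j)))
            \<longrightarrow> (\<forall>u\<in>sel_nodes V S. lu u = lu' u) \<and>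
                (\<forall>f\<in>double_edges E src tgt S. lf f = lf' f))"
proof -
  interpret cosmo_max_simplex V E src tgt T S
    using assms by unfold_locales
  have combination_iff: "(\<forall>j::'v + 'e. eN w j = (\<Sum>u\<in>sel_nodes V S. lu u * eN u j) +
      (\<Sum>f\<in>double_edges E src tgt S. lf f * (eN (src f) j - eN (tgt f) j)))
      \<longleftrightarrow> eN w = combination lu lf (\<lambda>_. 0)" for lu lf
    by (simp add: fun_eq_iff node_combination_apply)
  have "eN w = combination lu lf (\<lambda>_. 0) \<and> eN w = combination lu' lf' (\<lambda>_. 0) \<longrightarrow>
      (\<forall>u\<in>sel_nodes V S. lu u = lu' u) \<and> (\<forall>f\<in>double_edges E src tgt S. lf f = lf' f)"
    for lu lf lu' lf'
    using node_combination_unique[of lu lf lu' lf'] by metis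
  then show ?thesis
    unfolding combination_iff using node_combination_exists[OF \<open>w \<in> V\<close>] by blast
qed

end
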